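(* Let $X$ be a topological space, $x\in X$, and $\mathcal B_x$ a local base at $x$. Then $\bigcap\{\overline{B}:B\in\mathcal B_x\}$ equals the union of all finitely non-Hausdorff subsets of $X$ that contain $x$, and it also equals the union of all maximal finitely non-Hausdorff subsets of $X$ that contain $x$.
   Context: A non-empty subset $A$ of a topological space $X$ is called finitely non-Hausdorff if for every non-empty finite subset $F\subseteq A$ and every family $\{U_y:y\in F\}$ where each $U_y$ is an open neighborhood of $y$, we have $\bigcap_{y\in F}U_y\neq\emptyset$. It is maximal finitely non-Hausdorff if no finitely non-Hausdorff subset of $X$ properly contains it. *)

theory Defs
  imports "HOL-Analysis.Analysis"
begin

definition local_base :: "'a topology \<Rightarrow> 'a \<Rightarrow> 'a set set \<Rightarrow> bool" where
  "local_base X x \<B> \<longleftrightarrow>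
     (\<forall>B\<in>\<B>. openin X B \<and> x \<in> B) \<and>
     (\<forall>U. openin X U \<and> x \<in> U \<longrightarrow> (\<exists>B\<in>\<B>. B \<subseteq> U))"

definition finitely_non_hausdorff :: "'a topology \<Rightarrow> 'a set \<Rightarrow> bool" where
  "finitely_non_hausdorff X A \<longleftrightarrow>
     A \<noteq> {} \<and> A \<subseteq> topspace X \<and>
     (\<forall>F U. finite F \<and> F \<noteq> {} \<and> F \<subseteq> A \<and>
            (\<forall>y\<in>F. openin X (U y) \<and> y \<in> U y) \<longrightarrow> (\<Inter>y\<in>F. U y) \<noteq> {})"

definition max_finitely_non_hausdorff :: "'a topology \<Rightarrow> 'a set \<Rightarrow> bool" where
  "max_finitely_non_hausdorff X A \<longleftrightarrow>
     finitely_non_hausdorff X A \<and>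
     (\<forall>B. finitely_non_hausdorff X B \<and> A \<subseteq> B \<longrightarrow> B = A)"

end

theory Submission
  imports Defs
begin

text \<open>All three sets equal the set of points y for which {x, y} is finitely non-Hausdorff,
i.e. for which every neighbourhood of x meets every neighbourhood of y. For the
intersection of closures this is the local base property; for the union of finitely
non-Hausdorff sets it follows because the property passes to nonempty subsets; and for
maximal ones because, by Zorn's lemma, every finitely non-Hausdorff set lies in a maximal
one (a finite subset of the union of a chain already lies in one member).\<close>

lemma finitely_non_hausdorff_subset_topspace:
  "finitely_non_hausdorff X A \<Longrightarrow> A \<subseteq> topspace X"
  unfolding finitely_non_hausdorff_def by (elim conjE)

lemma finitely_non_hausdorff_Inter_nonempty:
  assumes "finitely_non_hausdorff X A" "finite F" "F \<noteq> {}" "F \<subseteq> A"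
    and "\<And>y. y \<in> F \<Longrightarrow> openin X (U y) \<and> y \<in> U y"
  shows "(\<Inter>y\<in>F. U y) \<noteq> {}"
  using assms unfolding finitely_non_hausdorff_def by (metis (no_types, lifting))

lemma finitely_non_hausdorff_mono:
  assumes "finitely_non_hausdorff X A" "B \<subseteq> A" "B \<noteq> {}"
  shows "finitely_non_hausdorff X B"
  unfolding finitely_non_hausdorff_def
proof (intro conjI allI impI)
  show "B \<subseteq> topspace X"
    using assms finitely_non_hausdorff_subset_topspace by blast
  fix F U assume "finite F \<and> F \<noteq> {} \<and> F \<subseteq> B \<and> (\<forall>y\<in>F. openin X (U y) \<and> y \<in> U y)"
  then show "(\<Inter>y\<in>F. U y) \<noteq> {}"
    using assms finitely_non_hausdorff_Inter_nonempty[of X A F U] by blast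
qed (use assms in blast)

lemma finitely_non_hausdorff_pair:
  "finitely_non_hausdorff X {x, y} \<longleftrightarrow>
     x \<in> topspace X \<and> y \<in> topspace X \<and>
     (\<forall>U V. openin X U \<and> x \<in> U \<and> openin X V \<and> y \<in> V \<longrightarrow> U \<inter> V \<noteq> {})"
proof (intro iffI conjI allI impI; (elim conjE)?)
  assume fnh: "finitely_non_hausdorff X {x, y}"
  then show top: "x \<in> topspace X" "y \<in> topspace X"
    using finitely_non_hausdorff_subset_topspace by blast+
  fix U V assume "openin X U" "x \<in> U" "openin X V" "y \<in> V"
  \<comment> \<open>intersecting both choices at each point also handles the case x = y\<close>
  define W where "W z = (if z = x then U else topspace X) \<inter> (if z = y then V else topspace X)"
    for z
  have "\<forall>z\<in>{x, y}. openin X (W z) \<and> z \<in> W z"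
    using \<open>x \<in> U\<close> \<open>y \<in> V\<close> \<open>openin X U\<close> \<open>openin X V\<close> top
      openin_subset[of X U] openin_subset[of X V] by (auto simp: W_def)
  then have "(\<Inter>z\<in>{x, y}. W z) \<noteq> {}"
    by (intro finitely_non_hausdorff_Inter_nonempty[OF fnh]) auto
  moreover have "(\<Inter>z\<in>{x, y}. W z) \<subseteq> U \<inter> V" by (auto simp: W_def)
  ultimately show "U \<inter> V \<noteq> {}" by blast
next
  assume top: "x \<in> topspace X" "y \<in> topspace X"
    and meet: "\<forall>U V. openin X U \<and> x \<in> U \<and> openin X V \<and> y \<in> V \<longrightarrow> U \<inter> V \<noteq> {}"
  show "finitely_non_hausdorff X {x, y}" unfolding finitely_non_hausdorff_def
  proof (intro conjI allI impI)
    fix F U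
    assume F: "finite F \<and> F \<noteq> {} \<and> F \<subseteq> {x, y} \<and> (\<forall>z\<in>F. openin X (U z) \<and> z \<in> U z)"
    show "(\<Inter>z\<in>F. U z) \<noteq> {}"
    proof (cases "F = {x, y}")
      case True
      with F have "openin X (U x)" "x \<in> U x" "openin X (U y)" "y \<in> U y" by auto
      with meet have "U x \<inter> U y \<noteq> {}" by blast
      then show ?thesis using True by simp
    next
      case False
      with F have "F = {x} \<or> F = {y}" by blast
      then obtain z where "F = {z}" by blast
      then show ?thesis using F by auto
    qed
  qed (use top in auto)
qed

lemma finitely_non_hausdorff_Union_chain:
  assumes "C \<noteq> {}" and chain: "subset.chain {A. finitely_non_hausdorff X A} C"
  shows "finitely_non_hausdorff X (\<Union>C)"
  unfolding finitely_non_hausdorff_def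
proof (intro conjI allI impI)
  have fnh: "finitely_non_hausdorff X A" if "A \<in> C" for A
    using chain that by (auto simp: subset.chain_def)
  obtain A where "A \<in> C" using \<open>C \<noteq> {}\<close> by blast
  then show "\<Union>C \<noteq> {}"
    using fnh unfolding finitely_non_hausdorff_def by blast
  show "\<Union>C \<subseteq> topspace X"
    using fnh finitely_non_hausdorff_subset_topspace by blast
  fix F U
  assume F: "finite F \<and> F \<noteq> {} \<and> F \<subseteq> \<Union>C \<and> (\<forall>y\<in>F. openin X (U y) \<and> y \<in> U y)"
  then obtain B where "B \<in> C" "F \<subseteq> B"
    using finite_subset_Union_chain[OF _ _ \<open>C \<noteq> {}\<close> chain] by blast
  with F show "(\<Inter>y\<in>F. U y) \<noteq> {}"
    by (intro finitely_non_hausdorff_Inter_nonempty[OF fnh]) auto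
qed

lemma finitely_non_hausdorff_extend_maximal:
  assumes "finitely_non_hausdorff X S"
  obtains M where "max_finitely_non_hausdorff X M" "S \<subseteq> M"
proof -
  let ?\<A> = "{A. finitely_non_hausdorff X A \<and> S \<subseteq> A}"
  have "\<exists>M\<in>?\<A>. \<forall>A\<in>?\<A>. M \<subseteq> A \<longrightarrow> A = M"
  proof (rule subset_Zorn_nonempty)
    fix C assume C: "C \<noteq> {}" "subset.chain ?\<A> C"
    then have "subset.chain {A. finitely_non_hausdorff X A} C" "\<forall>A\<in>C. S \<subseteq> A"
      by (auto simp: subset.chain_def)
    with C show "\<Union>C \<in> ?\<A>"
      using finitely_non_hausdorff_Union_chain by blast
  qed (use assms in blast)
  then obtain M where "M \<in> ?\<A>" "\<forall>A\<in>?\<A>. M \<subseteq> A \<longrightarrow> A = M" by blast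
  then have "max_finitely_non_hausdorff X M"
    unfolding max_finitely_non_hausdorff_def by blast
  with \<open>M \<in> ?\<A>\<close> show thesis using that by blast
qed

lemma Union_finitely_non_hausdorff_containing:
  "\<Union>{A. finitely_non_hausdorff X A \<and> x \<in> A} = {y. finitely_non_hausdorff X {x, y}}"
proof (intro equalityI subsetI)
  fix y assume "y \<in> \<Union>{A. finitely_non_hausdorff X A \<and> x \<in> A}"
  then obtain A where "finitely_non_hausdorff X A" "{x, y} \<subseteq> A" by blast
  then show "y \<in> {y. finitely_non_hausdorff X {x, y}}"
    using finitely_non_hausdorff_mono by blast
qed blast

lemma Union_max_finitely_non_hausdorff_containing:
  "\<Union>{A. max_finitely_non_hausdorff X A \<and> x \<in> A} = {y. finitely_non_hausdorff X {x, y}}"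
proof (intro equalityI subsetI)
  fix y assume "y \<in> \<Union>{A. max_finitely_non_hausdorff X A \<and> x \<in> A}"
  then show "y \<in> {y. finitely_non_hausdorff X {x, y}}"
    using Union_finitely_non_hausdorff_containing[of X x]
    by (auto simp: max_finitely_non_hausdorff_def)
next
  fix y assume "y \<in> {y. finitely_non_hausdorff X {x, y}}"
  then obtain M where "max_finitely_non_hausdorff X M" "{x, y} \<subseteq> M"
    using finitely_non_hausdorff_extend_maximal by blast
  then show "y \<in> \<Union>{A. max_finitely_non_hausdorff X A \<and> x \<in> A}" by blast
qed

lemma local_base_Inter_closure_of:
  assumes "x \<in> topspace X" and "local_base X x \<B>"
  shows "(\<Inter>B\<in>\<B>. X closure_of B) =
           {y \<in> topspace X. \<forall>U V. openin X U \<and> x \<in> U \<and> openin X V \<and> y \<in> V \<longrightarrow> U \<inter> V \<noteq> {}}"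
    (is "_ = ?meet")
proof -
  have base: "\<And>B. B \<in> \<B> \<Longrightarrow> openin X B \<and> x \<in> B"
    and refines: "\<And>U. openin X U \<Longrightarrow> x \<in> U \<Longrightarrow> \<exists>B\<in>\<B>. B \<subseteq> U"
    using assms(2) unfolding local_base_def by auto
  show ?thesis
  proof (intro equalityI subsetI)
    fix y assume y: "y \<in> (\<Inter>B\<in>\<B>. X closure_of B)"
    obtain B0 where "B0 \<in> \<B>" using refines[of "topspace X"] assms(1) by auto
    with y have "y \<in> X closure_of B0" by blast
    then have "y \<in> topspace X" by (simp add: in_closure_of)
    moreover have "U \<inter> V \<noteq> {}"
      if U: "openin X U" "x \<in> U" and V: "openin X V" "y \<in> V" for U V
    proof -
      obtain B where "B \<in> \<B>" "B \<subseteq> U" using refines U by blast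
      with y have "y \<in> X closure_of B" by blast
      with V \<open>B \<subseteq> U\<close> show ?thesis by (auto simp: in_closure_of)
    qed
    ultimately show "y \<in> ?meet" by blast
  next
    fix y assume y: "y \<in> ?meet"
    show "y \<in> (\<Inter>B\<in>\<B>. X closure_of B)"
    proof
      fix B assume "B \<in> \<B>"
      with base y show "y \<in> X closure_of B" unfolding in_closure_of by blast
    qed
  qed
qed

theorem lemma2p9:
  fixes X :: "'a topology" and x :: 'a and \<B> :: "'a set set"
  assumes "x \<in> topspace X" and "local_base X x \<B>"
  shows "(\<Inter>B\<in>\<B>. X closure_of B) = \<Union>{A. finitely_non_hausdorff X A \<and> x \<in> A} \<and>
         (\<Inter>B\<in>\<B>. X closure_of B) = \<Union>{A. max_finitely_non_hausdorff X A \<and> x \<in> A}"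
proof -
  have "(\<Inter>B\<in>\<B>. X closure_of B) = {y. finitely_non_hausdorff X {x, y}}"
    using local_base_Inter_closure_of[OF assms] assms(1)
    by (auto simp: finitely_non_hausdorff_pair)
  then show ?thesis
    by (simp add: Union_finitely_non_hausdorff_containing
        Union_max_finitely_non_hausdorff_containing)
qed

end
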